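(* There exists a setting (with pairwise distinct budgets) in which the budget-oblivious second-price auction (BOSP) has no pure Nash equilibrium.
   Context: Setting: there are $k\ge 1$ slots with public click-through rates $\theta_1>\theta_2>\dots>\theta_k>0$, and $n\ge k$ players. Player $i$ has a private value per click $v_i\ge 0$ and a budget $B_i>0$; the budgets $B_1,\dots,B_n$ are pairwise distinct. A setting consists of $k,n,(\theta_j),(v_i),(B_i)$ together with a fixed strict priority order on the players used to break all ties. Each player $i$ submits a value-bid $b_i\ge 0$ and a budget-bid $g_i\ge 0$; a mechanism outputs an injective partial slot assignment (assigned player $i$ gets slot $s(i)\in\{1,\dots,k\}$) and a price per click $p(i)\ge0$ for each assigned player; unassigned players pay nothing. The utility of player $i$ is $u_i=0$ if $i$ is unassigned, $u_i=\theta_{s(i)}(v_i-p(i))$ if $i$ is assigned and $\theta_{s(i)}p(i)\le B_i$, and $u_i=-\infty$ if $i$ is assigned and $\theta_{s(i)}p(i)>B_i$. A (pure) Nash equilibrium is a profile $(b_i,g_i)_{i}$ such that no player $i$ can strictly increase $u_i$ by unilaterally replacing $(b_i,g_i)$ with any other pair. BOSP: order the players by decreasing value-bid (ties broken by the priority order); for $j\le k$ the $j$-th player in this order gets slot $j$ and pays per click the value-bid of the $(j+1)$-th player in the order (0 if there is none); the remaining players are unassigned. Budget-bids are ignored. *)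

theory Defs
  imports Complex_Main "HOL-Library.Extended_Real"
begin

text \<open>Players are 0,...,n-1; slots are 1,...,k with click-through rates th 1,...,th k.
  The strict priority order on players is given by an injective key prio on players:
  player j has priority over player i iff prio j < prio i.
  A bid profile consists of value-bids b and budget-bids g (functions on players).\<close>

definition valid_setting ::
  "nat \<Rightarrow> nat \<Rightarrow> (nat \<Rightarrow> real) \<Rightarrow> (nat \<Rightarrow> real) \<Rightarrow> (nat \<Rightarrow> real) \<Rightarrow> (nat \<Rightarrow> nat) \<Rightarrow> bool" where
  "valid_setting k n th v B prio \<longleftrightarrow>
     1 \<le> k \<and> k \<le> n \<and>
     (\<forall>j1 j2. 1 \<le> j1 \<and> j1 < j2 \<and> j2 \<le> k \<longrightarrow> th j1 > th j2) \<and> th k > 0 \<and>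
     (\<forall>i<n. v i \<ge> 0) \<and> (\<forall>i<n. B i > 0) \<and>
     inj_on B {0..<n} \<and> inj_on prio {0..<n}"

definition precedes :: "(nat \<Rightarrow> nat) \<Rightarrow> (nat \<Rightarrow> real) \<Rightarrow> nat \<Rightarrow> nat \<Rightarrow> bool" where
  "precedes prio b j i \<longleftrightarrow> b j > b i \<or> (b j = b i \<and> prio j < prio i)"

definition bosp_rank :: "nat \<Rightarrow> (nat \<Rightarrow> nat) \<Rightarrow> (nat \<Rightarrow> real) \<Rightarrow> nat \<Rightarrow> nat" where
  "bosp_rank n prio b i = card {j. j < n \<and> precedes prio b j i}"

definition bosp_price :: "nat \<Rightarrow> (nat \<Rightarrow> nat) \<Rightarrow> (nat \<Rightarrow> real) \<Rightarrow> nat \<Rightarrow> real" where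
  "bosp_price n prio b i =
     (if \<exists>j<n. bosp_rank n prio b j = bosp_rank n prio b i + 1
      then b (THE j. j < n \<and> bosp_rank n prio b j = bosp_rank n prio b i + 1)
      else 0)"

definition bosp_utility ::
  "nat \<Rightarrow> nat \<Rightarrow> (nat \<Rightarrow> real) \<Rightarrow> (nat \<Rightarrow> real) \<Rightarrow> (nat \<Rightarrow> real) \<Rightarrow> (nat \<Rightarrow> nat)
   \<Rightarrow> (nat \<Rightarrow> real) \<Rightarrow> (nat \<Rightarrow> real) \<Rightarrow> nat \<Rightarrow> ereal" where
  "bosp_utility k n th v B prio b g i =
     (let r = bosp_rank n prio b i; p = bosp_price n prio b i in
      if r < k then
        (if th (r + 1) * p \<le> B i then ereal (th (r + 1) * (v i - p)) else -\<infinity>)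
      else 0)"

definition valid_profile :: "nat \<Rightarrow> (nat \<Rightarrow> real) \<Rightarrow> (nat \<Rightarrow> real) \<Rightarrow> bool" where
  "valid_profile n b g \<longleftrightarrow> (\<forall>i<n. b i \<ge> 0 \<and> g i \<ge> 0)"

definition bosp_nash ::
  "nat \<Rightarrow> nat \<Rightarrow> (nat \<Rightarrow> real) \<Rightarrow> (nat \<Rightarrow> real) \<Rightarrow> (nat \<Rightarrow> real) \<Rightarrow> (nat \<Rightarrow> nat)
   \<Rightarrow> (nat \<Rightarrow> real) \<Rightarrow> (nat \<Rightarrow> real) \<Rightarrow> bool" where
  "bosp_nash k n th v B prio b g \<longleftrightarrow>
     valid_profile n b g \<and>
     (\<forall>i<n. \<forall>b' g'. b' \<ge> 0 \<longrightarrow> g' \<ge> 0 \<longrightarrow>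
        bosp_utility k n th v B prio (b(i := b')) (g(i := g')) i
          \<le> bosp_utility k n th v B prio b g i)"

end

theory Submission
  imports Defs
begin

text \<open>
  Counterexample: two slots with click-through rates 2 and 1, three players who all value a
  click at 100, budgets 3, 4, 5 and priority given by the player index.

  With two slots, a bid of 0 secures a nonnegative utility,
  which bounds the leader's price by its budget; and a player who overtakes the leader (or
  the runner-up, when the top bid is strict) obtains an explicitly computable payoff.
  For the concrete instance these facts clash: if the top bid is strict, the last player
  profitably takes slot 2 for a price at most 5/2; if the top two bids tie, the runner-up
  must be unable to afford slot 1 at the leader's price, so its budget is below the
  leader's, contradicting that ties are broken in favour of the smaller index.
\<close>

lemma precedes_irrefl: "\<not> precedes prio b i i"
  by (simp add: precedes_def)

lemma precedes_asym: "precedes prio b i j \<Longrightarrow> \<not> precedes prio b j i"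
  by (auto simp add: precedes_def)

lemma precedes_trans: "precedes prio b i j \<Longrightarrow> precedes prio b j l \<Longrightarrow> precedes prio b i l"
  by (auto simp add: precedes_def)

lemma precedes_total:
  assumes "inj_on prio A" "i \<in> A" "j \<in> A" "i \<noteq> j"
  shows "precedes prio b i j \<or> precedes prio b j i"
  using assms unfolding precedes_def inj_on_def by (metis linorder_neqE_nat linorder_neq_iff)

lemma precedes_bid_le: "precedes prio b j i \<Longrightarrow> b i \<le> b j"
  by (auto simp add: precedes_def)

lemma bosp_utility_budget_bids_ignored:
  "bosp_utility k n th v B prio b g i = bosp_utility k n th v B prio b g' i"
  by (simp add: bosp_utility_def)

definition bosp_order3 :: "(nat \<Rightarrow> nat) \<Rightarrow> (nat \<Rightarrow> real) \<Rightarrow> nat \<Rightarrow> nat \<Rightarrow> nat \<Rightarrow> bool" where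
  "bosp_order3 prio b p0 p1 p2 \<longleftrightarrow>
     distinct [p0, p1, p2] \<and> p0 < 3 \<and> p1 < 3 \<and> p2 < 3 \<and>
     precedes prio b p0 p1 \<and> precedes prio b p1 p2"

lemma bosp_order3_exists:
  assumes "inj_on prio {0..<3}"
  shows "\<exists>p0 p1 p2. bosp_order3 prio b p0 p1 p2"
proof -
  have tot: "precedes prio b i j \<or> precedes prio b j i"
    if "i < 3" "j < 3" "i \<noteq> j" for i j
    using precedes_total[OF assms] that by auto
  note tr = precedes_trans[of prio b] and as = precedes_asym[of prio b]
  from tot[of 0 1] tot[of 0 2] tot[of 1 2] show ?thesis
    unfolding bosp_order3_def
    by (smt (verit, best) as tr distinct_length_2_or_more distinct_singleton
        One_nat_def Suc_1 numeral_3_eq_3 lessI less_SucI zero_less_Suc n_not_Suc_n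
        nat.distinct(1))
qed

lemma bosp_order3_rank_price:
  assumes "bosp_order3 prio b p0 p1 p2"
  shows "bosp_rank 3 prio b p0 = 0" "bosp_rank 3 prio b p1 = 1" "bosp_rank 3 prio b p2 = 2"
    and "bosp_price 3 prio b p0 = b p1" "bosp_price 3 prio b p1 = b p2"
proof -
  note o = assms[unfolded bosp_order3_def]
  have players: "j = p0 \<or> j = p1 \<or> j = p2" if "j < 3" for j
    using o that by auto
  have p02: "precedes prio b p0 p2" using o precedes_trans by blast
  have "{j. j < 3 \<and> precedes prio b j p0} = {}"
    using players o p02 precedes_asym precedes_irrefl by blast
  then show r0: "bosp_rank 3 prio b p0 = 0" by (simp add: bosp_rank_def)
  have "{j. j < 3 \<and> precedes prio b j p1} = {p0}"
    using players o precedes_asym precedes_irrefl by blast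
  then show r1: "bosp_rank 3 prio b p1 = 1" by (simp add: bosp_rank_def)
  have "{j. j < 3 \<and> precedes prio b j p2} = {p0, p1}"
    using players o p02 precedes_asym precedes_irrefl by blast
  then show r2: "bosp_rank 3 prio b p2 = 2" using o by (simp add: bosp_rank_def)
  have rank: "bosp_rank 3 prio b j = (if j = p0 then 0 else if j = p1 then 1 else 2)"
    if "j < 3" for j
    using players[OF that] r0 r1 r2 o by auto
  have "(THE j. j < 3 \<and> bosp_rank 3 prio b j = bosp_rank 3 prio b p0 + 1) = p1"
    by (rule the_equality) (use o rank in \<open>auto split: if_splits\<close>)
  then show "bosp_price 3 prio b p0 = b p1"
    using o r0 r1 by (auto simp add: bosp_price_def)
  have "(THE j. j < 3 \<and> bosp_rank 3 prio b j = bosp_rank 3 prio b p1 + 1) = p2"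
    by (rule the_equality) (use o rank in \<open>auto split: if_splits\<close>)
  then show "bosp_price 3 prio b p1 = b p2"
    using o r1 r2 by (auto simp add: bosp_price_def)
qed

lemma bosp_order3_utility:
  assumes "bosp_order3 prio b p0 p1 p2"
  shows "bosp_utility 2 3 th v B prio b g p0 =
           (if th 1 * b p1 \<le> B p0 then ereal (th 1 * (v p0 - b p1)) else -\<infinity>)"
    and "bosp_utility 2 3 th v B prio b g p1 =
           (if th 2 * b p2 \<le> B p1 then ereal (th 2 * (v p1 - b p2)) else -\<infinity>)"
    and "bosp_utility 2 3 th v B prio b g p2 = 0"
  using bosp_order3_rank_price[OF assms] by (simp_all add: bosp_utility_def numeral_2_eq_2)

lemma bosp_nash_deviation:
  assumes "bosp_nash k n th v B prio b g" "i < n" "b' \<ge> 0"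
  shows "bosp_utility k n th v B prio (b(i := b')) g i \<le> bosp_utility k n th v B prio b g i"
  using assms bosp_utility_budget_bids_ignored[of k n th v B prio "b(i := b')" g i "g(i := 0)"]
  unfolding bosp_nash_def by fastforce

lemma bosp_nash_bids_nonneg: "bosp_nash k n th v B prio b g \<Longrightarrow> i < n \<Longrightarrow> b i \<ge> 0"
  by (simp add: bosp_nash_def valid_profile_def)

text \<open>Bidding 0 guarantees a nonnegative utility: whoever bids 0 pays 0.\<close>
lemma bosp_zero_bid_utility_nonneg:
  assumes "valid_setting 2 3 th v B prio" "\<forall>j<3. b j \<ge> 0" "i < 3" "b i = 0"
  shows "bosp_utility 2 3 th v B prio b g i \<ge> 0"
proof -
  have ctr_dec: "\<forall>j1 j2. 1 \<le> j1 \<and> j1 < j2 \<and> j2 \<le> 2 \<longrightarrow> th j1 > th j2"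
    and s: "th 2 > 0" "\<forall>j<3. v j \<ge> 0" "\<forall>j<3. B j > 0" "inj_on prio {0..<3}"
    using assms(1) unfolding valid_setting_def by auto
  have "th 1 > 0" using ctr_dec[rule_format, of 1 2] s(1) by simp
  obtain p0 p1 p2 where o: "bosp_order3 prio b p0 p1 p2"
    using bosp_order3_exists[OF s(4)] by blast
  note u = bosp_order3_utility[OF o, of th v B g]
  have "b p1 \<le> b p0" "b p2 \<le> b p1" using o precedes_bid_le by (auto simp: bosp_order3_def)
  moreover have "i = p0 \<or> i = p1 \<or> i = p2" using o assms(3) by (auto simp: bosp_order3_def)
  ultimately show ?thesis
    using u s \<open>th 1 > 0\<close> assms(2,4) o by (auto simp: bosp_order3_def less_imp_le)
qed

lemma bosp_nash_utility_nonneg: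
  assumes "valid_setting 2 3 th v B prio" "bosp_nash 2 3 th v B prio b g" "i < 3"
  shows "bosp_utility 2 3 th v B prio b g i \<ge> 0"
proof -
  have "bosp_utility 2 3 th v B prio (b(i := 0)) g i \<ge> 0"
    using assms bosp_nash_bids_nonneg by (intro bosp_zero_bid_utility_nonneg) auto
  then show ?thesis using bosp_nash_deviation[OF assms(2,3), of 0] by simp
qed

lemma bosp_nash_leader_budget:
  assumes "valid_setting 2 3 th v B prio" "bosp_nash 2 3 th v B prio b g"
    and "bosp_order3 prio b p0 p1 p2"
  shows "th 1 * b p1 \<le> B p0"
  using bosp_nash_utility_nonneg[OF assms(1,2), of p0] bosp_order3_utility(1)[OF assms(3)] assms(3)
  by (auto simp: bosp_order3_def split: if_splits)

text \<open>A player j overtaking the leader p0 gets slot 1 at price b p0; in an equilibrium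
  this payoff (if affordable) is no better than j's current one.\<close>
lemma bosp_nash_overtake_leader:
  assumes "bosp_nash 2 3 th v B prio b g" "distinct [p0, j, q]" "p0 < 3" "j < 3" "q < 3"
    and "precedes prio b p0 j" "precedes prio b p0 q" "th 1 * b p0 \<le> B j"
  shows "ereal (th 1 * (v j - b p0)) \<le> bosp_utility 2 3 th v B prio b g j"
proof -
  define b' where "b' = b(j := b p0 + 1)"
  have "bosp_order3 prio b' j p0 q"
    using assms unfolding bosp_order3_def b'_def by (auto simp: precedes_def)
  then have "bosp_utility 2 3 th v B prio b' g j = ereal (th 1 * (v j - b p0))"
    using assms(2,8) bosp_order3_utility(1) by (simp add: b'_def)
  moreover have "b p0 + 1 \<ge> 0" using bosp_nash_bids_nonneg[OF assms(1,3)] by simp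
  ultimately show ?thesis using bosp_nash_deviation[OF assms(1,4)] b'_def by metis
qed

text \<open>If the top bid is strict, the last player can slip in between the first two and get
  slot 2 at price b p1; in an equilibrium this (if affordable) is not profitable.\<close>
lemma bosp_nash_overtake_runner_up:
  assumes "bosp_nash 2 3 th v B prio b g" "bosp_order3 prio b p0 p1 p2"
    and "b p1 < b p0" "th 2 * b p1 \<le> B p2"
  shows "th 2 * (v p2 - b p1) \<le> 0"
proof -
  define b' where "b' = b(p2 := (b p0 + b p1) / 2)"
  have o: "bosp_order3 prio b' p0 p2 p1"
    using assms(2,3) unfolding bosp_order3_def b'_def by (auto simp: precedes_def)
  then have "bosp_utility 2 3 th v B prio b' g p2 = ereal (th 2 * (v p2 - b p1))"
    using assms(2,4) bosp_order3_utility(2)[OF o, of th v B g] by (simp add: b'_def bosp_order3_def)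
  moreover have "(b p0 + b p1) / 2 \<ge> 0"
    using assms(2) bosp_nash_bids_nonneg[OF assms(1)] by (auto simp: bosp_order3_def)
  ultimately have "ereal (th 2 * (v p2 - b p1)) \<le> 0"
    using bosp_nash_deviation[OF assms(1), of p2 "(b p0 + b p1) / 2"]
      bosp_order3_utility(3)[OF assms(2)] assms(2)
    by (simp add: b'_def bosp_order3_def)
  then show ?thesis by simp
qed

definition ex_ctr :: "nat \<Rightarrow> real" where "ex_ctr j = (if j = 1 then 2 else 1)"
definition ex_value :: "nat \<Rightarrow> real" where "ex_value i = 100"
definition ex_budget :: "nat \<Rightarrow> real" where "ex_budget i = 3 + real i"

lemma ex_valid_setting: "valid_setting 2 3 ex_ctr ex_value ex_budget id"
  unfolding valid_setting_def by (auto simp add: ex_ctr_def ex_value_def ex_budget_def inj_on_def)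

text \<open>In an equilibrium of the example the two top bids cannot tie: the runner-up would then
  rather overtake the leader, unless it cannot afford slot 1 at the leader's price; but the
  leader can, so the runner-up would have the smaller budget, i.e. the larger index, and
  then the tie would have been broken in its favour.\<close>
lemma ex_nash_no_tie_at_top:
  assumes ne: "bosp_nash 2 3 ex_ctr ex_value ex_budget id b g" and o: "bosp_order3 id b p0 p1 p2"
  shows "b p1 < b p0"
proof (rule ccontr)
  assume "\<not> b p1 < b p0"
  have p: "p0 < 3" "p1 < 3" "p2 < 3" "distinct [p0, p1, p2]"
    "precedes id b p0 p1" "precedes id b p0 p2"
    using o precedes_trans by (auto simp: bosp_order3_def)
  then have tie: "b p1 = b p0" and "p0 < p1"
    using \<open>\<not> b p1 < b p0\<close> by (auto simp: precedes_def)
  have lead: "2 * b p0 \<le> 3 + real p0"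
    using bosp_nash_leader_budget[OF ex_valid_setting ne o] tie
    by (simp add: ex_ctr_def ex_budget_def)
  have "0 \<le> b p2" using bosp_nash_bids_nonneg[OF ne p(3)] .
  then have current: "bosp_utility 2 3 ex_ctr ex_value ex_budget id b g p1 \<le> 100"
    using bosp_order3_utility(2)[OF o] by (simp add: ex_ctr_def ex_value_def)
  have "\<not> 2 * b p0 \<le> 3 + real p1"
  proof
    assume "2 * b p0 \<le> 3 + real p1"
    then have "ereal (2 * (100 - b p0)) \<le> bosp_utility 2 3 ex_ctr ex_value ex_budget id b g p1"
      using bosp_nash_overtake_leader[OF ne p(4) p(1,2,3) p(5,6)]
      by (simp add: ex_ctr_def ex_value_def ex_budget_def)
    also note current
    finally show False using lead p(1) by simp
  qed
  with lead \<open>p0 < p1\<close> show False by simp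
qed

theorem theorem1:
  shows "\<exists>k n th v B prio. valid_setting k n th v B prio \<and>
           \<not> (\<exists>b g. bosp_nash k n th v B prio b g)"
proof (intro exI conjI notI)
  show "valid_setting 2 3 ex_ctr ex_value ex_budget id" by (rule ex_valid_setting)
  assume "\<exists>b g. bosp_nash 2 3 ex_ctr ex_value ex_budget id b g"
  then obtain b g where ne: "bosp_nash 2 3 ex_ctr ex_value ex_budget id b g" by blast
  obtain p0 p1 p2 where o: "bosp_order3 id b p0 p1 p2"
    using bosp_order3_exists[of id b] by auto
  have "p0 < 3" "p2 < 3" using o by (auto simp: bosp_order3_def)
  have "2 * b p1 \<le> 3 + real p0"
    using bosp_nash_leader_budget[OF ex_valid_setting ne o] by (simp add: ex_ctr_def ex_budget_def)
  text \<open>So slot 2 costs the last player at most 5/2, below its budget and value.\<close>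
  moreover have "b p1 < b p0" by (rule ex_nash_no_tie_at_top[OF ne o])
  ultimately show False
    using bosp_nash_overtake_runner_up[OF ne o] \<open>p0 < 3\<close> \<open>p2 < 3\<close>
    by (simp add: ex_ctr_def ex_value_def ex_budget_def)
qed

end
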